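(* Let $n\ge 4$ and let $\mathcal M$ be an IP-SEG* model which is an IP-SEG representation of the chordless cycle $C_n$ and which contains at least one interval segment. Then $\mathcal M$ has exactly one interval arc (and hence exactly one permutation arc).
   Context: Let $L_1$ and $L_2$ be two distinct parallel horizontal lines in the plane. A closed straight line segment is an interval segment if both of its endpoints lie on the same line $L_i$, and a permutation segment if one endpoint lies on $L_1$ and the other on $L_2$. An IP-SEG model is a finite family of interval and permutation segments; its intersection graph has one vertex per segment, adjacent iff the segments intersect. An IP-SEG* model is an IP-SEG model in which all interval segments lie on the same line $L_i$. For $m\ge 3$, $C_m$ is the chordless cycle on $v_1,\dots,v_m$ with $v_i$ adjacent to $v_{i+1}$ (indices mod $m$) and no other edges. An IP-SEG representation of $C_m$ is an IP-SEG model with segments $s(v_1),\dots,s(v_m)$ whose intersection graph is $C_m$ with $s(v_i)$ corresponding to $v_i$. If such a representation contains both interval and permutation segments, an interval arc is a maximal sequence of cyclically consecutive segments $s(v_i),\dots,s(v_j)$ that are all interval segments; a permutation arc is a maximal sequence of cyclically consecutive segments that are all permutation segments. *)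

theory Defs
  imports "HOL-Analysis.Analysis"
begin

text \<open>The two distinct parallel horizontal
lines are L1 = {y = a} and L2 = {y = b} with a \<noteq> b.\<close>

type_synonym point = "real \<times> real"
type_synonym seg = "point \<times> point"

definition seg_set :: "seg \<Rightarrow> point set" where
  "seg_set s = closed_segment (fst s) (snd s)"

definition on_line :: "real \<Rightarrow> point \<Rightarrow> bool" where
  "on_line c p \<longleftrightarrow> snd p = c"

definition interval_seg :: "real \<Rightarrow> real \<Rightarrow> seg \<Rightarrow> bool" where
  "interval_seg a b s \<longleftrightarrow>
     (on_line a (fst s) \<and> on_line a (snd s)) \<or> (on_line b (fst s) \<and> on_line b (snd s))"

definition permutation_seg :: "real \<Rightarrow> real \<Rightarrow> seg \<Rightarrow> bool" where
  "permutation_seg a b s \<longleftrightarrow>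
     (on_line a (fst s) \<and> on_line b (snd s)) \<or> (on_line b (fst s) \<and> on_line a (snd s))"

text \<open>A family of segments indexed by {0..<n} (the segment s i represents vertex v_(i+1)).\<close>

definition IP_SEG_model :: "real \<Rightarrow> real \<Rightarrow> nat \<Rightarrow> (nat \<Rightarrow> seg) \<Rightarrow> bool" where
  "IP_SEG_model a b n s \<longleftrightarrow>
     (\<forall>i<n. interval_seg a b (s i) \<or> permutation_seg a b (s i))"

definition IP_SEG_star_model :: "real \<Rightarrow> real \<Rightarrow> nat \<Rightarrow> (nat \<Rightarrow> seg) \<Rightarrow> bool" where
  "IP_SEG_star_model a b n s \<longleftrightarrow> IP_SEG_model a b n s \<and>
     (\<exists>c\<in>{a, b}. \<forall>i<n. interval_seg a b (s i) \<longrightarrow>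
        on_line c (fst (s i)) \<and> on_line c (snd (s i)))"

definition cycle_adj :: "nat \<Rightarrow> nat \<Rightarrow> nat \<Rightarrow> bool" where
  "cycle_adj n i j \<longleftrightarrow> j = (i + 1) mod n \<or> i = (j + 1) mod n"

definition represents_cycle :: "nat \<Rightarrow> (nat \<Rightarrow> seg) \<Rightarrow> bool" where
  "represents_cycle n s \<longleftrightarrow>
     (\<forall>i<n. \<forall>j<n. i \<noteq> j \<longrightarrow>
        (seg_set (s i) \<inter> seg_set (s j) \<noteq> {} \<longleftrightarrow> cycle_adj n i j))"

definition cyc_arc :: "nat \<Rightarrow> nat \<Rightarrow> nat \<Rightarrow> nat set" where
  "cyc_arc n i k = {(i + t) mod n | t. t < k}"

definition is_cyc_arc :: "nat \<Rightarrow> nat set \<Rightarrow> bool" where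
  "is_cyc_arc n A \<longleftrightarrow> (\<exists>i<n. \<exists>k. 1 \<le> k \<and> k \<le> n \<and> A = cyc_arc n i k)"

definition maximal_arc :: "nat \<Rightarrow> (nat \<Rightarrow> bool) \<Rightarrow> nat set \<Rightarrow> bool" where
  "maximal_arc n P A \<longleftrightarrow> is_cyc_arc n A \<and> (\<forall>i\<in>A. P i) \<and>
     \<not> (\<exists>B. is_cyc_arc n B \<and> (\<forall>i\<in>B. P i) \<and> A \<subset> B)"

definition interval_arc :: "real \<Rightarrow> real \<Rightarrow> nat \<Rightarrow> (nat \<Rightarrow> seg) \<Rightarrow> nat set \<Rightarrow> bool" where
  "interval_arc a b n s A \<longleftrightarrow> maximal_arc n (\<lambda>i. interval_seg a b (s i)) A"

definition permutation_arc :: "real \<Rightarrow> real \<Rightarrow> nat \<Rightarrow> (nat \<Rightarrow> seg) \<Rightarrow> nat set \<Rightarrow> bool" where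
  "permutation_arc a b n s A \<longleftrightarrow> maximal_arc n (\<lambda>i. permutation_seg a b (s i)) A"

end

theory Submission
  imports Defs
begin

text \<open>Let \<open>y = c\<close> be the line carrying the interval segments, so every segment is either
  horizontal on it or crosses to the other line \<open>y = d\<close>. Two horizontal segments meet iff their
  x-ranges overlap, a horizontal and a crossing segment meet iff the foot of the crossing one lies
  in the x-range, and two crossing segments are disjoint iff one lies strictly left of the other on
  both lines. As \<open>C\<^sub>n\<close> with \<open>n \<ge> 4\<close> is not an interval graph, some segment is crossing.
  Consider the maximal run of crossing segments containing the one with leftmost foot. A crossing
  segment outside this run meets none of its segments, so it lies right of the whole run. If there
  were such segments, the horizontal paths just before the first and just after the last of them
  would both cover the larger of the two extreme feet of the run, which yields a chord. Hence the
  horizontal segments form a single cyclic arc, and so do the crossing ones.\<close>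

section \<open>Segments between two horizontal lines\<close>

definition horizontal :: "real \<Rightarrow> seg \<Rightarrow> bool" where
  "horizontal c s \<longleftrightarrow> snd (fst s) = c \<and> snd (snd s) = c"

definition crossing :: "real \<Rightarrow> real \<Rightarrow> seg \<Rightarrow> bool" where
  "crossing c d s \<longleftrightarrow>
     (snd (fst s) = c \<and> snd (snd s) = d) \<or> (snd (fst s) = d \<and> snd (snd s) = c)"

definition foot :: "real \<Rightarrow> seg \<Rightarrow> real" where
  "foot c s = (if snd (fst s) = c then fst (fst s) else fst (snd s))"

definition head :: "real \<Rightarrow> seg \<Rightarrow> real" where
  "head c s = (if snd (fst s) = c then fst (snd s) else fst (fst s))"

definition x_range :: "seg \<Rightarrow> real set" where
  "x_range s = closed_segment (fst (fst s)) (fst (snd s))"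

definition left_of :: "real \<Rightarrow> seg \<Rightarrow> seg \<Rightarrow> bool" where
  "left_of c s t \<longleftrightarrow> foot c s < foot c t \<and> head c s < head c t"

lemma horizontal_not_crossing: "c \<noteq> d \<Longrightarrow> horizontal c s \<Longrightarrow> \<not> crossing c d s"
  by (auto simp: horizontal_def crossing_def)

lemma left_of_trans: "left_of c s t \<Longrightarrow> left_of c t r \<Longrightarrow> left_of c s r"
  by (auto simp: left_of_def)

lemma mem_closed_segment_pair:
  fixes x1 y1 x2 y2 :: real
  shows "p \<in> closed_segment (x1, y1) (x2, y2) \<longleftrightarrow>
    (\<exists>u. 0 \<le> u \<and> u \<le> 1 \<and> fst p = (1 - u) * x1 + u * x2 \<and> snd p = (1 - u) * y1 + u * y2)"
  by (cases p) (simp add: in_segment)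

lemma mem_seg_set_horizontal:
  assumes "horizontal c s"
  shows "p \<in> seg_set s \<longleftrightarrow> snd p = c \<and> fst p \<in> x_range s"
proof -
  obtain x1 x2 where s: "s = ((x1, c), (x2, c))"
    using assms unfolding horizontal_def by (metis prod.collapse)
  have "(1 - u) * c + u * c = c" for u :: real by (simp add: algebra_simps)
  moreover have "z \<in> closed_segment x1 x2 \<longleftrightarrow> (\<exists>u. 0 \<le> u \<and> u \<le> 1 \<and> z = (1 - u) * x1 + u * x2)"
    for z by (simp add: in_segment)
  ultimately show ?thesis unfolding s seg_set_def x_range_def mem_closed_segment_pair fst_conv snd_conv
    by (auto simp: algebra_simps)
qed

lemma seg_set_crossing:
  "c \<noteq> d \<Longrightarrow> crossing c d s \<Longrightarrow> seg_set s = closed_segment (foot c s, c) (head c s, d)"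
  unfolding crossing_def seg_set_def foot_def head_def
  by (cases s) (auto simp: closed_segment_commute prod_eq_iff)

lemma closed_segment_across_lines_at_bottom:
  fixes c d x y :: real
  assumes "c \<noteq> d" "p \<in> closed_segment (x, c) (y, d)" "snd p = c"
  shows "fst p = x"
proof -
  obtain u where u: "0 \<le> u" "u \<le> 1" "fst p = (1 - u) * x + u * y" "snd p = (1 - u) * c + u * d"
    using assms(2) by (auto simp: mem_closed_segment_pair)
  have "u * (d - c) = 0" using u(4) assms(3) by (auto simp: algebra_simps)
  then have "u = 0" using assms(1) by auto
  then show ?thesis using u by simp
qed

lemma closed_segments_across_lines_disjoint_iff:
  fixes x1 x2 y1 y2 c d :: real
  assumes "c \<noteq> d"
  shows "closed_segment (x1, c) (y1, d) \<inter> closed_segment (x2, c) (y2, d) = {} \<longleftrightarrow>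
    (x1 < x2 \<and> y1 < y2) \<or> (x2 < x1 \<and> y2 < y1)"
    (is "?S1 \<inter> ?S2 = {} \<longleftrightarrow> _")
proof
  show "?S1 \<inter> ?S2 = {}" if "(x1 < x2 \<and> y1 < y2) \<or> (x2 < x1 \<and> y2 < y1)"
  proof (rule ccontr)
    assume "?S1 \<inter> ?S2 \<noteq> {}"
    then obtain p where "p \<in> ?S1" "p \<in> ?S2" by blast
    then obtain u w where u: "0 \<le> u" "u \<le> 1" "fst p = (1 - u) * x1 + u * y1" "snd p = (1 - u) * c + u * d"
      and w: "fst p = (1 - w) * x2 + w * y2" "snd p = (1 - w) * c + w * d"
      by (auto simp: mem_closed_segment_pair)
    have "(u - w) * (d - c) = 0" using u(4) w(2) by (simp add: algebra_simps)
    then have "u = w" using assms by auto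
    then have "(1 - u) * (x2 - x1) + u * (y2 - y1) = 0" using u(3) w(1) by (simp add: algebra_simps)
    moreover have pos: "0 < (1 - u) * p + u * q" if "0 < p" "0 < q" for p q :: real
      using u(1,2) that by (cases "u = 0") (auto intro: add_nonneg_pos)
    ultimately show False
      using that pos[of "x2 - x1" "y2 - y1"] pos[of "x1 - x2" "y1 - y2"] by (auto simp: algebra_simps)
  qed
  show "(x1 < x2 \<and> y1 < y2) \<or> (x2 < x1 \<and> y2 < y1)" if "?S1 \<inter> ?S2 = {}"
  proof (rule ccontr)
    assume order: "\<not> ?thesis"
    txt \<open>The difference of the abscissae at a common height changes sign between the lines.\<close>
    obtain u where u: "0 \<le> u" "u \<le> 1" "(1 - u) * x1 + u * y1 = (1 - u) * x2 + u * y2"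
    proof (cases "x1 = x2")
      case True then show ?thesis using that[of 0] by simp
    next
      case False
      define u where "u = (x1 - x2) / ((x1 - x2) - (y1 - y2))"
      have ne: "(x1 - x2) - (y1 - y2) \<noteq> 0" using order False by auto
      have "(1 - u) * (x1 - x2) + u * (y1 - y2) = 0"
        unfolding u_def using ne by (simp add: field_simps)
      moreover have "0 \<le> u \<and> u \<le> 1"
        using order False unfolding u_def by (cases "x1 < x2") (auto simp: divide_simps)
      ultimately show ?thesis using that[of u] by (simp add: algebra_simps)
    qed
    then have "((1 - u) * x1 + u * y1, (1 - u) * c + u * d) \<in> ?S1 \<inter> ?S2"
      using u(1,2) by (auto simp: mem_closed_segment_pair)
    then show False using that by blast
  qed
qed

lemma horizontal_segs_meet_iff:
  assumes "horizontal c s" "horizontal c t"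
  shows "seg_set s \<inter> seg_set t \<noteq> {} \<longleftrightarrow> x_range s \<inter> x_range t \<noteq> {}"
proof
  assume "seg_set s \<inter> seg_set t \<noteq> {}"
  then show "x_range s \<inter> x_range t \<noteq> {}" using assms mem_seg_set_horizontal by blast
next
  assume "x_range s \<inter> x_range t \<noteq> {}"
  then obtain z where "z \<in> x_range s" "z \<in> x_range t" by blast
  then have "(z, c) \<in> seg_set s" "(z, c) \<in> seg_set t" using assms mem_seg_set_horizontal by auto
  then show "seg_set s \<inter> seg_set t \<noteq> {}" by blast
qed

lemma horizontal_crossing_meet_iff:
  assumes "c \<noteq> d" "horizontal c s" "crossing c d t"
  shows "seg_set s \<inter> seg_set t \<noteq> {} \<longleftrightarrow> foot c t \<in> x_range s"
proof
  assume "seg_set s \<inter> seg_set t \<noteq> {}"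
  then obtain p where p: "p \<in> seg_set s" "p \<in> seg_set t" by blast
  then have "snd p = c" "fst p \<in> x_range s" using assms(2) mem_seg_set_horizontal by auto
  moreover have "fst p = foot c t"
    using closed_segment_across_lines_at_bottom[OF assms(1)] p(2) seg_set_crossing[OF assms(1,3)]
      \<open>snd p = c\<close> by auto
  ultimately show "foot c t \<in> x_range s" by simp
next
  assume "foot c t \<in> x_range s"
  then have "(foot c t, c) \<in> seg_set s" "(foot c t, c) \<in> seg_set t"
    using mem_seg_set_horizontal[OF assms(2)] seg_set_crossing[OF assms(1,3)] by auto
  then show "seg_set s \<inter> seg_set t \<noteq> {}" by blast
qed

lemma crossing_segs_disjoint_iff:
  "c \<noteq> d \<Longrightarrow> crossing c d s \<Longrightarrow> crossing c d t \<Longrightarrow>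
    seg_set s \<inter> seg_set t = {} \<longleftrightarrow> left_of c s t \<or> left_of c t s"
  by (simp add: seg_set_crossing closed_segments_across_lines_disjoint_iff left_of_def)

lemma convex_chain_covers_segment:
  fixes I :: "nat \<Rightarrow> real set"
  assumes "i \<le> j" and convex: "\<And>k. convex (I k)"
    and overlap: "\<And>k. i \<le> k \<Longrightarrow> k < j \<Longrightarrow> I k \<inter> I (Suc k) \<noteq> {}"
    and "x \<in> I i" "y \<in> I j" "z \<in> closed_segment x y"
  shows "\<exists>k. i \<le> k \<and> k \<le> j \<and> z \<in> I k"
  using assms(1,3,5,6)
proof (induction j arbitrary: y z rule: dec_induct)
  case base
  then show ?case using closed_segment_subset[OF \<open>x \<in> I i\<close> _ convex] by auto
next
  case (step m)
  obtain w where w: "w \<in> I m" "w \<in> I (Suc m)" using step.prems(1)[of m] step.hyps by auto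
  have "z \<in> closed_segment x w \<or> z \<in> closed_segment w y"
    using step.prems(3) by (auto simp: closed_segment_eq_real_ivl split: if_split_asm)
  then show ?case
  proof
    assume "z \<in> closed_segment x w"
    then show ?thesis using step.IH[of w z] step.prems(1) w(1) by fastforce
  next
    assume "z \<in> closed_segment w y"
    then have "z \<in> I (Suc m)" using closed_segment_subset[OF w(2) step.prems(2) convex] by auto
    then show ?thesis using step.hyps by (intro exI[of _ "Suc m"]) auto
  qed
qed

text \<open>On the line a convex set lies entirely on one side of a disjoint convex set.\<close>

lemma closed_segments_across_disjoint_convex_meet:
  fixes a1 a2 b1 b2 :: real
  assumes "convex A" "convex B" "A \<inter> B = {}" "a1 \<in> A" "a2 \<in> A" "b1 \<in> B" "b2 \<in> B"
  shows "closed_segment a1 b1 \<inter> closed_segment a2 b2 \<noteq> {}"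
proof -
  have "closed_segment a1 a2 \<inter> closed_segment b1 b2 = {}"
    using assms closed_segment_subset by blast
  then consider "max a1 a2 < min b1 b2" | "max b1 b2 < min a1 a2"
    by (fastforce simp: closed_segment_eq_real_ivl split: if_split_asm)
  then show ?thesis
  proof cases
    case 1
    then have "max a1 a2 \<in> closed_segment a1 b1 \<inter> closed_segment a2 b2"
      by (auto simp: closed_segment_eq_real_ivl)
    then show ?thesis by blast
  next
    case 2
    then have "min a1 a2 \<in> closed_segment a1 b1 \<inter> closed_segment a2 b2"
      by (auto simp: closed_segment_eq_real_ivl)
    then show ?thesis by blast
  qed
qed

section \<open>Cyclic arcs\<close>

lemma add_mod_right_cancel_nat: "((x::nat) + r) mod n = (y + r) mod n \<longleftrightarrow> x mod n = y mod n"
  by (simp add: ab_semigroup_add_class.add_ac(1) add.commute nat_mod_eq_iff)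

lemma rotation_surj:
  fixes i n r :: nat
  assumes "i < n"
  obtains j where "j < n" "(r + j) mod n = i"
proof
  show "(i + n - r mod n) mod n < n" using assms by simp
  have "(r + (i + n - r mod n) mod n) mod n = (r mod n + (i + n - r mod n)) mod n"
    by (simp add: mod_add_left_eq mod_add_right_eq)
  also have "r mod n + (i + n - r mod n) = i + n" using assms mod_less_divisor[of n r] by linarith
  finally show "(r + (i + n - r mod n) mod n) mod n = i" using assms by simp
qed

lemma is_cyc_arc_subset: "0 < n \<Longrightarrow> is_cyc_arc n A \<Longrightarrow> A \<subseteq> {..<n}"
  by (auto simp: is_cyc_arc_def cyc_arc_def)

lemma is_cyc_arc_cyc_arc: "0 < n \<Longrightarrow> 1 \<le> k \<Longrightarrow> k \<le> n \<Longrightarrow> is_cyc_arc n (cyc_arc n r k)"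
  unfolding is_cyc_arc_def cyc_arc_def
  by (rule exI[of _ "r mod n"]) (auto simp: mod_add_left_eq)

lemma cyc_arc_tail:
  assumes "a \<le> n"
  shows "cyc_arc n a (n - a) = {a..<n}"
proof -
  have "x = (a + (x - a)) mod n \<and> x - a < n - a" if "a \<le> x" "x < n" for x
    using that by simp
  then show ?thesis unfolding cyc_arc_def by fastforce
qed

lemma cyc_arc_rotate:
  assumes "0 < n" "{j. j < n \<and> P ((r + j) mod n)} = cyc_arc n r' k"
  shows "{i. i < n \<and> P i} = cyc_arc n (r + r') k"
proof (intro equalityI subsetI)
  fix i assume i: "i \<in> {i. i < n \<and> P i}"
  then obtain j where j: "j < n" "(r + j) mod n = i" using rotation_surj by blast
  then have "j \<in> cyc_arc n r' k" using i assms(2) by blast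
  then obtain t where "t < k" "j = (r' + t) mod n" by (auto simp: cyc_arc_def)
  then show "i \<in> cyc_arc n (r + r') k"
    using j(2) unfolding cyc_arc_def by (auto simp: mod_add_right_eq add.assoc)
next
  fix i assume "i \<in> cyc_arc n (r + r') k"
  then obtain t where t: "t < k" "i = (r + r' + t) mod n" by (auto simp: cyc_arc_def)
  then have "(r' + t) mod n \<in> cyc_arc n r' k" by (auto simp: cyc_arc_def)
  then have "P ((r + (r' + t) mod n) mod n)" using assms(2) by blast
  then show "i \<in> {i. i < n \<and> P i}" using t assms(1) by (simp add: mod_add_right_eq add.assoc)
qed

lemma cyc_arc_complement:
  assumes "0 < n" "k \<le> n"
  shows "{..<n} - cyc_arc n r k = cyc_arc n (r + k) (n - k)"
proof (intro equalityI subsetI)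
  fix i assume "i \<in> {..<n} - cyc_arc n r k"
  then obtain j where j: "j < n" "(r + j) mod n = i" "i \<notin> cyc_arc n r k"
    using rotation_surj by blast
  then have "k \<le> j" by (auto simp: cyc_arc_def)
  then have "i = (r + k + (j - k)) mod n" "j - k < n - k" using j by auto
  then show "i \<in> cyc_arc n (r + k) (n - k)" by (auto simp: cyc_arc_def)
next
  fix i assume "i \<in> cyc_arc n (r + k) (n - k)"
  then obtain t where t: "t < n - k" "i = (r + k + t) mod n" by (auto simp: cyc_arc_def)
  have "i \<notin> cyc_arc n r k"
  proof
    assume "i \<in> cyc_arc n r k"
    then obtain t' where "t' < k" "(t' + r) mod n = ((k + t) + r) mod n"
      using t by (auto simp: cyc_arc_def ac_simps)
    then have "t' mod n = (k + t) mod n" by (simp only: add_mod_right_cancel_nat)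
    then show False using \<open>t' < k\<close> t assms(2) by simp
  qed
  then show "i \<in> {..<n} - cyc_arc n r k" using t assms(1) by simp
qed

text \<open>Rotating the start to just after the last failure of \<open>P\<close> before \<open>t\<close> puts \<open>t\<close> into the
  initial run of \<open>P\<close>, with a failure at the end.\<close>

lemma cyclic_run_start:
  fixes n t :: nat
  assumes "t < n" "P t" "\<exists>i<n. \<not> P i"
  obtains r h where "h < n" "(r + h) mod n = t" "\<And>j. j \<le> h \<Longrightarrow> P ((r + j) mod n)"
    "\<not> P ((r + (n - 1)) mod n)"
proof -
  define K where "K = {k. k < n \<and> \<not> P ((t + k) mod n)}"
  have "K \<noteq> {}"
  proof -
    obtain i where "i < n" "\<not> P i" using assms(3) by blast
    moreover obtain j where "j < n" "(t + j) mod n = i" using rotation_surj[OF \<open>i < n\<close>] .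
    ultimately show ?thesis unfolding K_def by blast
  qed
  moreover have "finite K" unfolding K_def by simp
  ultimately have q: "Max K \<in> K" "\<And>k. k \<in> K \<Longrightarrow> k \<le> Max K" by auto
  define q where "q = Max K"
  have qn: "q < n" and Pq: "\<not> P ((t + q) mod n)" using q(1) unfolding q_def K_def by auto
  show ?thesis
  proof (rule that[of "n - 1 - q" "t + q + 1"])
    show "n - 1 - q < n" using qn by simp
    show "(t + q + 1 + (n - 1 - q)) mod n = t" using qn assms(1) by simp
    show "P ((t + q + 1 + j) mod n)" if "j \<le> n - 1 - q" for j
    proof (cases "q + 1 + j < n")
      case True
      then have "q + 1 + j \<notin> K" using q(2) unfolding q_def by fastforce
      then show ?thesis using True unfolding K_def by (simp add: ac_simps)
    next
      case False
      then have wrap: "t + q + 1 + j = t + n" using that qn by simp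
      show ?thesis unfolding wrap using assms(1,2) by simp
    qed
    have "t + q + 1 + (n - 1) = (t + q) + n" using assms(1) by simp
    then show "\<not> P ((t + q + 1 + (n - 1)) mod n)" using Pq by simp
  qed
qed

lemma maximal_arc_unique:
  assumes "0 < n" "1 \<le> k" "k \<le> n" "{i. i < n \<and> P i} = cyc_arc n r k"
  shows "\<exists>!A. maximal_arc n P A"
proof -
  have below: "B \<subseteq> cyc_arc n r k" if "is_cyc_arc n B" "\<forall>i\<in>B. P i" for B
    using that is_cyc_arc_subset[OF assms(1)] assms(4) by blast
  have arc: "is_cyc_arc n (cyc_arc n r k)" "\<forall>i\<in>cyc_arc n r k. P i"
    using is_cyc_arc_cyc_arc[OF assms(1-3)] assms(4) by auto
  show ?thesis
  proof (rule ex1I[of _ "cyc_arc n r k"])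
    show "maximal_arc n P (cyc_arc n r k)"
      unfolding maximal_arc_def using arc below by blast
    show "B = cyc_arc n r k" if "maximal_arc n P B" for B
      using that arc below unfolding maximal_arc_def by blast
  qed
qed

lemma maximal_arcs_unique_complement:
  assumes "0 < n" "1 \<le> k" "k < n" "{i. i < n \<and> P i} = cyc_arc n r k"
    and "\<And>i. i < n \<Longrightarrow> Q i \<longleftrightarrow> \<not> P i"
  shows "(\<exists>!A. maximal_arc n P A) \<and> (\<exists>!A. maximal_arc n Q A)"
proof
  show "\<exists>!A. maximal_arc n P A"
    using maximal_arc_unique[OF assms(1,2) _ assms(4)] assms(3) by simp
  have "{i. i < n \<and> Q i} = {..<n} - cyc_arc n r k"
    using assms(4,5) by auto
  also have "\<dots> = cyc_arc n (r + k) (n - k)"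
    using cyc_arc_complement[OF assms(1)] assms(3) by simp
  finally show "\<exists>!A. maximal_arc n Q A"
    using maximal_arc_unique[OF assms(1), of "n - k" Q "r + k"] assms(3) by simp
qed

lemma cycle_adj_succ: "k + 1 < n \<Longrightarrow> cycle_adj n k (k + 1)"
  by (simp add: cycle_adj_def)

lemma cycle_adj_first_last: "2 \<le> n \<Longrightarrow> cycle_adj n 0 (n - 1)"
  by (simp add: cycle_adj_def)

lemma not_cycle_adj:
  assumes "i + 2 \<le> j" "j < n" "\<not> (i = 0 \<and> j = n - 1)"
  shows "\<not> cycle_adj n i j"
proof -
  have "(j + 1) mod n \<noteq> i"
  proof (cases "j + 1 < n")
    case False
    then have "j + 1 = n" using assms(2) by simp
    then show ?thesis using assms by auto
  qed (use assms in simp)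
  then show ?thesis using assms unfolding cycle_adj_def by auto
qed

lemma cycle_adj_rotate:
  assumes "i < n" "j < n"
  shows "cycle_adj n ((r + i) mod n) ((r + j) mod n) \<longleftrightarrow> cycle_adj n i j"
proof -
  have succ: "((r + x) mod n + 1) mod n = ((x + 1) + r) mod n" for x
    by (metis mod_add_left_eq add.commute add.assoc)
  show ?thesis
    unfolding cycle_adj_def succ
    using add_mod_right_cancel_nat[of i r n "j + 1"]
      add_mod_right_cancel_nat[of j r n "i + 1"] assms
    by (simp add: add.commute)
qed

lemma represents_cycle_rotate:
  assumes "represents_cycle n s"
  shows "represents_cycle n (\<lambda>j. s ((r + j) mod n))"
  unfolding represents_cycle_def
proof (intro allI impI)
  fix i j assume ij: "i < n" "j < n" "i \<noteq> j"
  then have "(r + i) mod n \<noteq> (r + j) mod n" "(r + i) mod n < n" "(r + j) mod n < n"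
    using add_mod_right_cancel_nat[of i r n j] by (auto simp: add.commute)
  then show "seg_set (s ((r + i) mod n)) \<inter> seg_set (s ((r + j) mod n)) \<noteq> {} \<longleftrightarrow> cycle_adj n i j"
    using assms[unfolded represents_cycle_def] cycle_adj_rotate[OF ij(1,2)] by simp
qed

section \<open>Segment representations of a chordless cycle\<close>

locale segment_cycle =
  fixes n :: nat and u :: "nat \<Rightarrow> seg" and c d :: real
  assumes lines_distinct: "c \<noteq> d" and four_le: "4 \<le> n"
    and horizontal_or_crossing: "\<And>i. i < n \<Longrightarrow> horizontal c (u i) \<or> crossing c d (u i)"
    and represents: "represents_cycle n u"
begin

abbreviation meets :: "nat \<Rightarrow> nat \<Rightarrow> bool" where
  "meets i j \<equiv> seg_set (u i) \<inter> seg_set (u j) \<noteq> {}"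

lemma meets_succ: "k + 1 < n \<Longrightarrow> meets k (k + 1)"
  using represents cycle_adj_succ[of k n] unfolding represents_cycle_def by auto

lemma meets_first_last: "meets 0 (n - 1)"
  using represents cycle_adj_first_last[of n] four_le unfolding represents_cycle_def by auto

lemma not_meets: "i + 2 \<le> j \<Longrightarrow> j < n \<Longrightarrow> \<not> (i = 0 \<and> j = n - 1) \<Longrightarrow> \<not> meets i j"
  using represents not_cycle_adj[of i j n] unfolding represents_cycle_def by auto

lemma rotate: "segment_cycle n (\<lambda>j. u ((r + j) mod n)) c d"
  using lines_distinct four_le horizontal_or_crossing represents_cycle_rotate[OF represents]
  by unfold_locales auto

lemma horizontal_path_covers:
  assumes "i \<le> j" "j < n" "\<And>k. i \<le> k \<Longrightarrow> k \<le> j \<Longrightarrow> horizontal c (u k)"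
    and "x \<in> x_range (u i)" "y \<in> x_range (u j)" "z \<in> closed_segment x y"
  shows "\<exists>k. i \<le> k \<and> k \<le> j \<and> z \<in> x_range (u k)"
proof (rule convex_chain_covers_segment[OF assms(1) _ _ assms(4-6)])
  show "convex (x_range (u k))" for k by (simp add: x_range_def)
  show "x_range (u k) \<inter> x_range (u (Suc k)) \<noteq> {}" if "i \<le> k" "k < j" for k
    using that assms(2,3) meets_succ[of k] horizontal_segs_meet_iff[of c "u k" "u (Suc k)"] by auto
qed

text \<open>Otherwise \<open>C\<^sub>n\<close> would be an interval graph: the intervals of \<open>u 0\<close> and \<open>u 2\<close> are disjoint,
  and both \<open>u 1\<close> and the path \<open>u 3, \<dots>, u (n - 1)\<close> must bridge the gap between them.\<close>

lemma not_all_horizontal: "\<not> (\<forall>i<n. horizontal c (u i))"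
proof
  assume horizontal: "\<forall>i<n. horizontal c (u i)"
  have overlap: "x_range (u i) \<inter> x_range (u j) \<noteq> {} \<longleftrightarrow> meets i j" if "i < n" "j < n" for i j
    using horizontal that horizontal_segs_meet_iff by blast
  obtain z1 where z1: "z1 \<in> x_range (u 0)" "z1 \<in> x_range (u 1)"
    using overlap[of 0 1] meets_succ[of 0] four_le by auto
  obtain z2 where z2: "z2 \<in> x_range (u 1)" "z2 \<in> x_range (u 2)"
    using overlap[of 1 2] meets_succ[of 1] four_le by (auto simp: numeral_2_eq_2)
  obtain z3 where z3: "z3 \<in> x_range (u 2)" "z3 \<in> x_range (u 3)"
    using overlap[of 2 3] meets_succ[of 2] four_le by (auto simp: numeral_3_eq_3)
  obtain z0 where z0: "z0 \<in> x_range (u 0)" "z0 \<in> x_range (u (n - 1))"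
    using overlap[of 0 "n - 1"] meets_first_last four_le by auto
  have "x_range (u 0) \<inter> x_range (u 2) = {}"
    using overlap[of 0 2] not_meets[of 0 2] four_le by auto
  then have "closed_segment z1 z2 \<inter> closed_segment z0 z3 \<noteq> {}"
    using closed_segments_across_disjoint_convex_meet[OF _ _ _ z1(1) z0(1) z2(2) z3(1)]
    by (simp add: x_range_def)
  then obtain z where z: "z \<in> closed_segment z1 z2" "z \<in> closed_segment z3 z0"
    by (auto simp: closed_segment_commute)
  have "z \<in> x_range (u 1)"
    using closed_segment_subset[OF z1(2) z2(1)] z(1) by (auto simp: x_range_def)
  moreover obtain k where k: "3 \<le> k" "k \<le> n - 1" "z \<in> x_range (u k)"
  proof -
    have "3 \<le> n - 1" "n - 1 < n" using four_le by auto
    then show ?thesis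
      using that horizontal_path_covers[of 3 "n - 1" z3 z0 z] horizontal z3(2) z0(2) z(2) by auto
  qed
  moreover have "k < n" using k(2) four_le by linarith
  ultimately have "meets 1 k" using overlap[of 1 k] k(3) four_le by auto
  then show False using not_meets[of 1 k] k(1) \<open>k < n\<close> by simp
qed

text \<open>Consecutive segments of the path meet, so the side of \<open>u t\<close> cannot switch along it.\<close>

lemma crossing_path_one_side:
  assumes "e < n" "\<And>k. k \<le> e \<Longrightarrow> crossing c d (u k)" "crossing c d (u t)"
    and "\<And>k. k \<le> e \<Longrightarrow> \<not> meets k t"
  shows "(\<forall>k\<le>e. left_of c (u k) (u t)) \<or> (\<forall>k\<le>e. left_of c (u t) (u k))"
  using assms
proof (induction e)
  case 0
  then show ?case using crossing_segs_disjoint_iff[OF lines_distinct, of "u 0" "u t"] by auto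
next
  case (Suc e)
  have IH: "(\<forall>k\<le>e. left_of c (u k) (u t)) \<or> (\<forall>k\<le>e. left_of c (u t) (u k))"
    using Suc by auto
  have "left_of c (u (Suc e)) (u t) \<or> left_of c (u t) (u (Suc e))"
    using crossing_segs_disjoint_iff[OF lines_distinct, of "u (Suc e)" "u t"] Suc.prems by auto
  moreover have "\<not> left_of c (u e) (u (Suc e))" "\<not> left_of c (u (Suc e)) (u e)"
    using meets_succ[of e] crossing_segs_disjoint_iff[OF lines_distinct, of "u e" "u (Suc e)"] Suc.prems
    by auto
  ultimately show ?case
    using IH left_of_trans[of c "u e" "u t" "u (Suc e)"] left_of_trans[of c "u (Suc e)" "u t" "u e"]
    by (auto simp: le_Suc_eq)
qed

lemma crossing_right_of_run:
  assumes "e < n" "\<And>k. k \<le> e \<Longrightarrow> crossing c d (u k)" "crossing c d (u t)"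
    and "\<And>k. k \<le> e \<Longrightarrow> \<not> meets k t"
    and "h \<le> e" "foot c (u h) \<le> foot c (u t)" "k \<le> e"
  shows "foot c (u k) < foot c (u t)"
  using crossing_path_one_side[OF assms(1-4)] assms(5-7) by (fastforce simp: left_of_def)

text \<open>The two horizontal paths \<open>u (e + 1), \<dots>, u (g' - 1)\<close> and \<open>u (g + 1), \<dots>, u (n - 1)\<close> start and
  end at the feet of the crossing segments around them; if those feet were separated, both paths
  would cover a common abscissa, giving a chord.\<close>

lemma crossing_feet_not_separated:
  assumes "e + 1 < g'" "g' \<le> g" "g + 1 < n"
    and "crossing c d (u 0)" "crossing c d (u e)" "crossing c d (u g')" "crossing c d (u g)"
    and "\<And>k. e < k \<Longrightarrow> k < g' \<Longrightarrow> horizontal c (u k)"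
    and "\<And>k. g < k \<Longrightarrow> k < n \<Longrightarrow> horizontal c (u k)"
  shows "min (foot c (u g')) (foot c (u g)) \<le> max (foot c (u 0)) (foot c (u e))"
proof (rule ccontr)
  let ?F = "\<lambda>k. foot c (u k)"
  define z where "z = max (?F 0) (?F e)"
  assume "\<not> ?thesis"
  then have z: "z \<in> closed_segment (?F e) (?F g')" "z \<in> closed_segment (?F g) (?F 0)"
    unfolding z_def by (auto simp: closed_segment_eq_real_ivl)
  have foot_mem: "?F j \<in> x_range (u i)" if "meets i j" "horizontal c (u i)" "crossing c d (u j)" for i j
    using that horizontal_crossing_meet_iff[OF lines_distinct] by blast
  have "?F e \<in> x_range (u (e + 1))"
    using foot_mem meets_succ[of e] assms by (simp add: Int_commute)
  moreover have "?F g' \<in> x_range (u (g' - 1))"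
    using foot_mem meets_succ[of "g' - 1"] assms by simp
  moreover have "e + 1 \<le> g' - 1" "g' - 1 < n" using assms(1-3) by auto
  moreover have "horizontal c (u k)" if "e + 1 \<le> k" "k \<le> g' - 1" for k
    using that assms(1,8) by auto
  ultimately obtain k1 where k1: "e + 1 \<le> k1" "k1 \<le> g' - 1" "z \<in> x_range (u k1)"
    using horizontal_path_covers[of "e + 1" "g' - 1" "?F e" "?F g'" z] z(1) by blast
  have "?F g \<in> x_range (u (g + 1))"
    using foot_mem meets_succ[of g] assms by (simp add: Int_commute)
  moreover have "?F 0 \<in> x_range (u (n - 1))"
    using foot_mem meets_first_last assms by (simp add: Int_commute)
  moreover have "g + 1 \<le> n - 1" "n - 1 < n" using assms(3) by auto
  moreover have "horizontal c (u k)" if "g + 1 \<le> k" "k \<le> n - 1" for k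
    using that assms(3,9) by auto
  ultimately obtain k2 where k2: "g + 1 \<le> k2" "k2 \<le> n - 1" "z \<in> x_range (u k2)"
    using horizontal_path_covers[of "g + 1" "n - 1" "?F g" "?F 0" z] z(2) by blast
  have "meets k1 k2"
    using k1 k2 assms horizontal_segs_meet_iff[of c "u k1" "u k2"] by auto
  moreover have "\<not> meets k1 k2"
    using not_meets[of k1 k2] k1 k2 assms by auto
  ultimately show False by contradiction
qed

text \<open>The first and the last crossing segment after the run meet no segment of it, so they lie
  right of the run, which contains the leftmost foot; this contradicts the previous lemma.\<close>

lemma horizontal_after_crossing_run:
  assumes "e + 1 < n" "\<And>k. k \<le> e \<Longrightarrow> crossing c d (u k)"
    and "horizontal c (u (e + 1))" "horizontal c (u (n - 1))"
    and "h \<le> e" "\<And>j. j < n \<Longrightarrow> crossing c d (u j) \<Longrightarrow> foot c (u h) \<le> foot c (u j)"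
    and "e < j" "j < n"
  shows "horizontal c (u j)"
proof (rule ccontr)
  define S where "S = {j. e < j \<and> j < n \<and> \<not> horizontal c (u j)}"
  assume "\<not> ?thesis"
  then have "S \<noteq> {}" using assms(7,8) unfolding S_def by blast
  moreover have "finite S" unfolding S_def by simp
  ultimately have S: "Min S \<in> S" "Max S \<in> S" "\<And>k. k \<in> S \<Longrightarrow> Min S \<le> k \<and> k \<le> Max S"
    by auto
  define g' where "g' = Min S"
  define g where "g = Max S"
  have in_S: "e + 1 < t \<and> t + 1 < n \<and> crossing c d (u t)" if "t \<in> S" for t
  proof -
    have "t \<noteq> e + 1" "t \<noteq> n - 1" using that assms(3,4) unfolding S_def by auto
    then show ?thesis using that horizontal_or_crossing unfolding S_def by auto
  qed
  have right: "foot c (u k) < foot c (u t)" if "t \<in> S" "k \<le> e" for k t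
  proof (rule crossing_right_of_run[OF _ assms(2) _ _ assms(5) _ that(2)])
    show "e < n" "crossing c d (u t)" using in_S[OF that(1)] by auto
    show "\<not> meets k t" if "k \<le> e" for k
    proof -
      have "e + 1 < t" "t + 1 < n" using in_S[OF \<open>t \<in> S\<close>] by auto
      then show ?thesis using not_meets[of k t] that by fastforce
    qed
    show "foot c (u h) \<le> foot c (u t)" using assms(6) in_S[OF that(1)] by auto
  qed
  have "min (foot c (u g')) (foot c (u g)) \<le> max (foot c (u 0)) (foot c (u e))"
  proof (rule crossing_feet_not_separated)
    show "e + 1 < g'" "g' \<le> g" "g + 1 < n" using in_S S unfolding g'_def g_def by auto
    show "crossing c d (u g')" "crossing c d (u g)" using in_S S unfolding g'_def g_def by auto
    show "crossing c d (u 0)" "crossing c d (u e)" using assms(2) by auto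
    show "horizontal c (u k)" if "e < k" "k < g'" for k
      using that S(3)[of k] in_S S unfolding g'_def S_def by fastforce
    show "horizontal c (u k)" if "g < k" "k < n" for k
      using that S(2) S(3)[of k] unfolding g_def S_def by fastforce
  qed
  moreover have "max (foot c (u 0)) (foot c (u e)) < min (foot c (u g')) (foot c (u g))"
    using right[of g' 0] right[of g' e] right[of g 0] right[of g e] S unfolding g'_def g_def by auto
  ultimately show False by linarith
qed

lemma leftmost_crossing:
  obtains t where "t < n" "crossing c d (u t)"
    "\<And>j. j < n \<Longrightarrow> crossing c d (u j) \<Longrightarrow> foot c (u t) \<le> foot c (u j)"
proof -
  have "{j. j < n \<and> crossing c d (u j)} \<noteq> {}"
    using not_all_horizontal horizontal_or_crossing by blast
  then obtain t where "is_arg_min (\<lambda>j. foot c (u j)) (\<lambda>j. j \<in> {j. j < n \<and> crossing c d (u j)}) t"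
    using ex_is_arg_min_if_finite[of "{j. j < n \<and> crossing c d (u j)}"] by auto
  then have "t < n" "crossing c d (u t)"
    "\<forall>j. j < n \<and> crossing c d (u j) \<longrightarrow> foot c (u t) \<le> foot c (u j)"
    unfolding is_arg_min_def by (auto simp: not_less)
  with that show ?thesis by blast
qed

lemma horizontal_indices_after_crossing_run:
  assumes "h < n" "\<And>j. j \<le> h \<Longrightarrow> crossing c d (u j)" "\<not> crossing c d (u (n - 1))"
    and "\<And>j. j < n \<Longrightarrow> crossing c d (u j) \<Longrightarrow> foot c (u h) \<le> foot c (u j)"
  obtains e where "e + 1 < n" "{j. j < n \<and> horizontal c (u j)} = {e + 1..<n}"
proof -
  have last: "horizontal c (u (n - 1))"
    using assms(3) horizontal_or_crossing[of "n - 1"] four_le by auto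
  define e where "e = (LEAST j. horizontal c (u (j + 1)))"
  have "n - 2 + 1 = n - 1" using four_le by simp
  then have witness: "horizontal c (u (n - 2 + 1))" using last by simp
  have e: "horizontal c (u (e + 1))"
    unfolding e_def by (rule LeastI[of _ "n - 2"]) (rule witness)
  have "e \<le> n - 2"
    unfolding e_def by (rule Least_le) (rule witness)
  then have "e + 1 < n" using four_le by linarith
  have run: "crossing c d (u k)" if "k \<le> e" for k
  proof (cases k)
    case 0
    then show ?thesis using assms(2)[of 0] by simp
  next
    case (Suc k')
    then have "\<not> horizontal c (u k)"
      using not_less_Least[of k' "\<lambda>j. horizontal c (u (j + 1))"] that unfolding e_def by simp
    then show ?thesis using horizontal_or_crossing[of k] that \<open>e + 1 < n\<close> by auto
  qed
  have "h \<le> e"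
  proof (rule ccontr)
    assume "\<not> h \<le> e"
    then show False using assms(2)[of "e + 1"] e horizontal_not_crossing[OF lines_distinct] by simp
  qed
  then have "horizontal c (u j)" if "e < j" "j < n" for j
    using horizontal_after_crossing_run[OF \<open>e + 1 < n\<close> run e last _ assms(4)] that by blast
  moreover have "\<not> horizontal c (u j)" if "j \<le> e" for j
    using run[OF that] horizontal_not_crossing[OF lines_distinct] by blast
  ultimately have "horizontal c (u j) \<longleftrightarrow> e < j" if "j < n" for j
    using that by (cases "e < j") auto
  then have "{j. j < n \<and> horizontal c (u j)} = {e + 1..<n}" by auto
  with \<open>e + 1 < n\<close> show ?thesis using that by blast
qed

text \<open>Rotate the cycle so that the leftmost crossing segment lies in the initial run of crossing
  segments and the last segment is horizontal.\<close>

lemma horizontal_indices_arc: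
  assumes "\<exists>i<n. horizontal c (u i)"
  obtains r k where "1 \<le> k" "k < n" "{i. i < n \<and> horizontal c (u i)} = cyc_arc n r k"
proof -
  obtain t where t: "t < n" "crossing c d (u t)"
    and leftmost: "\<And>j. j < n \<Longrightarrow> crossing c d (u j) \<Longrightarrow> foot c (u t) \<le> foot c (u j)"
    by (rule leftmost_crossing) auto
  have "\<exists>i<n. \<not> crossing c d (u i)"
    using assms horizontal_not_crossing[OF lines_distinct] by blast
  then obtain r h where h: "h < n" "(r + h) mod n = t"
    and run: "\<And>j. j \<le> h \<Longrightarrow> crossing c d (u ((r + j) mod n))"
    and last: "\<not> crossing c d (u ((r + (n - 1)) mod n))"
    using cyclic_run_start[of t n "\<lambda>i. crossing c d (u i)"] t by blast
  define v where "v j = u ((r + j) mod n)" for j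
  interpret v: segment_cycle n v c d unfolding v_def by (rule rotate)
  have "crossing c d (v j)" if "j \<le> h" for j
    using run[OF that] unfolding v_def .
  moreover have "\<not> crossing c d (v (n - 1))"
    using last unfolding v_def .
  moreover have "foot c (v h) \<le> foot c (v j)" if "j < n" "crossing c d (v j)" for j
    using leftmost that h(2) unfolding v_def by simp
  ultimately obtain e where e: "e + 1 < n" "{j. j < n \<and> horizontal c (v j)} = {e + 1..<n}"
    by (rule v.horizontal_indices_after_crossing_run[OF h(1)])
  then have "{j. j < n \<and> horizontal c (v j)} = cyc_arc n (e + 1) (n - (e + 1))"
    using cyc_arc_tail[of "e + 1" n] by simp
  then have "{i. i < n \<and> horizontal c (u i)} = cyc_arc n (r + (e + 1)) (n - (e + 1))"
    using cyc_arc_rotate[of n "\<lambda>i. horizontal c (u i)" r] four_le unfolding v_def by simp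
  moreover have "1 \<le> n - (e + 1)" "n - (e + 1) < n" using e(1) by auto
  ultimately show ?thesis using that by blast
qed

end

lemma IP_SEG_star_model_lines:
  assumes "a \<noteq> b" "IP_SEG_star_model a b n s"
  obtains c d where "c \<noteq> d"
    "\<And>i. i < n \<Longrightarrow> interval_seg a b (s i) \<longleftrightarrow> horizontal c (s i)"
    "\<And>x. permutation_seg a b x \<longleftrightarrow> crossing c d x"
    "\<And>i. i < n \<Longrightarrow> horizontal c (s i) \<or> crossing c d (s i)"
proof -
  obtain c where c: "c \<in> {a, b}"
    and on_c: "\<And>i. i < n \<Longrightarrow> interval_seg a b (s i) \<Longrightarrow> on_line c (fst (s i)) \<and> on_line c (snd (s i))"
    and kinds: "\<And>i. i < n \<Longrightarrow> interval_seg a b (s i) \<or> permutation_seg a b (s i)"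
    using assms(2) unfolding IP_SEG_star_model_def IP_SEG_model_def by blast
  define d where "d = (if c = a then b else a)"
  have "c \<noteq> d" using c assms(1) d_def by auto
  moreover have "interval_seg a b (s i) \<longleftrightarrow> horizontal c (s i)" if "i < n" for i
    using on_c[OF that] c unfolding interval_seg_def horizontal_def on_line_def by auto
  moreover have "permutation_seg a b x \<longleftrightarrow> crossing c d x" for x
    using c d_def assms(1) unfolding permutation_seg_def crossing_def on_line_def by auto
  ultimately show ?thesis using that kinds by metis
qed

theorem mainTheorem5:
  fixes a b :: real and n :: nat and s :: "nat \<Rightarrow> seg"
  assumes "a \<noteq> b"
    and "n \<ge> 4"
    and "IP_SEG_star_model a b n s"
    and "represents_cycle n s"
    and "\<exists>i<n. interval_seg a b (s i)"
  shows "(\<exists>!A. interval_arc a b n s A) \<and> (\<exists>!A. permutation_arc a b n s A)"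
proof -
  obtain c d where cd: "c \<noteq> d"
    and interval: "\<And>i. i < n \<Longrightarrow> interval_seg a b (s i) \<longleftrightarrow> horizontal c (s i)"
    and permutation: "\<And>x. permutation_seg a b x \<longleftrightarrow> crossing c d x"
    and kinds: "\<And>i. i < n \<Longrightarrow> horizontal c (s i) \<or> crossing c d (s i)"
    using IP_SEG_star_model_lines[OF assms(1,3)] by blast
  interpret segment_cycle n s c d
    using cd assms(2,4) kinds by unfold_locales
  have "\<exists>i<n. horizontal c (s i)" using assms(5) interval by blast
  then obtain r k where k: "1 \<le> k" "k < n" and arc: "{i. i < n \<and> horizontal c (s i)} = cyc_arc n r k"
    by (rule horizontal_indices_arc)
  have "{i. i < n \<and> interval_seg a b (s i)} = cyc_arc n r k"
    using arc interval by auto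
  moreover have "permutation_seg a b (s i) \<longleftrightarrow> \<not> interval_seg a b (s i)" if "i < n" for i
    using kinds[OF that] interval[OF that] permutation horizontal_not_crossing[OF cd] by blast
  moreover have "0 < n" using assms(2) by simp
  ultimately show ?thesis
    unfolding interval_arc_def permutation_arc_def using k by (intro maximal_arcs_unique_complement)
qed

end
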